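(* Let $\mathcal{I}_{\mathrm{inv}}$ be an invariancy interval and let $\bar\epsilon\in\operatorname{int}(\mathcal{E})$ be a boundary point of $\mathcal{I}_{\mathrm{inv}}$. Then for every $\hat\epsilon\in\mathcal{I}_{\mathrm{inv}}$, $\operatorname{rank}(X^*(\hat\epsilon))\neq\operatorname{rank}(X^*(\bar\epsilon))$ or $\operatorname{rank}(S^*(\hat\epsilon))\neq\operatorname{rank}(S^*(\bar\epsilon))$, where $(X^*(\epsilon),y^*(\epsilon),S^*(\epsilon))$ denotes a maximally complementary optimal solution at $\epsilon$.
   Context: Let $\mathbb{S}^n$ be the real symmetric $n\times n$ matrices, $\langle C,X\rangle=\operatorname{trace}(CX)$, $\succeq0$ positive semidefinite, $\succ0$ positive definite. Fix $C,\bar C,A^1,\dots,A^m\in\mathbb{S}^n$, $b\in\mathbb{R}^m$; $(P_\epsilon)$: $\inf\{\langle C+\epsilon\bar C,X\rangle:\langle A^i,X\rangle=b_i,\ X\succeq0\}$; $(D_\epsilon)$: $\sup\{b^Ty:\sum_iy_iA^i+S=C+\epsilon\bar C,\ S\succeq0\}$; $v(\epsilon)$ the optimal value of $(P_\epsilon)$, $\mathcal{E}=\{\epsilon:v(\epsilon)>-\infty\}$. Standing assumptions: the $A^i$ are linearly independent and there exist $X\succ0$ feasible for $(P_0)$ and $(y,S)$ with $S\succ0$ feasible for $(D_0)$; then for $\epsilon\in\operatorname{int}(\mathcal{E})$ the optimal sets $\mathcal{P}^*(\epsilon)$, $\mathcal{D}^*(\epsilon)$ are nonempty compact and strong duality holds.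 A maximally complementary optimal solution at $\epsilon$ is an optimal $(X^*(\epsilon),y^*(\epsilon),S^*(\epsilon))$ with $X^*(\epsilon)\in\operatorname{ri}\mathcal{P}^*(\epsilon)$ and $(y^*(\epsilon),S^*(\epsilon))\in\operatorname{ri}\mathcal{D}^*(\epsilon)$; its ranks are independent of the choice. Optimal partition: $\pi(\epsilon)=(\mathcal{R}(X^*(\epsilon)),(\mathcal{R}(X^*(\epsilon))+\mathcal{R}(S^*(\epsilon)))^\perp,\mathcal{R}(S^*(\epsilon)))$, with $\mathcal{R}$ the column space. An invariancy set is a maximal subset of $\operatorname{int}(\mathcal{E})$ on which $\pi(\epsilon)$ is constant; it is either a singleton or an open interval, and in the latter case it is called an invariancy interval. *)

theory Defs
  imports "HOL-Analysis.Analysis"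
begin

definition symmetric_mat :: "real^'n^'n \<Rightarrow> bool" where
  "symmetric_mat M \<longleftrightarrow> transpose M = M"

definition psd :: "real^'n^'n \<Rightarrow> bool" where
  "psd M \<longleftrightarrow> symmetric_mat M \<and> (\<forall>v. 0 \<le> v \<bullet> (M *v v))"

definition pd :: "real^'n^'n \<Rightarrow> bool" where
  "pd M \<longleftrightarrow> symmetric_mat M \<and> (\<forall>v. v \<noteq> 0 \<longrightarrow> 0 < v \<bullet> (M *v v))"

definition frob :: "real^'n^'n \<Rightarrow> real^'n^'n \<Rightarrow> real" where
  "frob M N = trace (M ** N)"

definition col_space :: "real^'n^'n \<Rightarrow> (real^'n) set" where
  "col_space M = range (\<lambda>v. M *v v)"

definition primal_feas :: "('m::finite \<Rightarrow> real^'n^'n) \<Rightarrow> real^'m \<Rightarrow> (real^'n^'n) set" where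
  "primal_feas A b = {X. symmetric_mat X \<and> psd X \<and> (\<forall>i. frob (A i) X = b $ i)}"

definition dual_feas :: "real^'n^'n \<Rightarrow> real^'n^'n \<Rightarrow> ('m::finite \<Rightarrow> real^'n^'n) \<Rightarrow> real
      \<Rightarrow> ((real^'m) \<times> (real^'n^'n)) set" where
  "dual_feas C Cb A \<epsilon> = {(y, S). psd S \<and> (\<Sum>i\<in>UNIV. y $ i *\<^sub>R A i) + S = C + \<epsilon> *\<^sub>R Cb}"

text \<open>Optimal value (in the extended reals; +\<infinity> if infeasible).\<close>
definition opt_val :: "real^'n^'n \<Rightarrow> real^'n^'n \<Rightarrow> ('m::finite \<Rightarrow> real^'n^'n) \<Rightarrow> real^'m \<Rightarrow> real \<Rightarrow> ereal" where
  "opt_val C Cb A b \<epsilon> = (INF X\<in>primal_feas A b. ereal (frob (C + \<epsilon> *\<^sub>R Cb) X))"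

definition E_set :: "real^'n^'n \<Rightarrow> real^'n^'n \<Rightarrow> ('m::finite \<Rightarrow> real^'n^'n) \<Rightarrow> real^'m \<Rightarrow> real set" where
  "E_set C Cb A b = {\<epsilon>. opt_val C Cb A b \<epsilon> > -\<infinity>}"

definition primal_opt :: "real^'n^'n \<Rightarrow> real^'n^'n \<Rightarrow> ('m::finite \<Rightarrow> real^'n^'n) \<Rightarrow> real^'m \<Rightarrow> real
      \<Rightarrow> (real^'n^'n) set" where
  "primal_opt C Cb A b \<epsilon> = {X \<in> primal_feas A b.
      \<forall>X' \<in> primal_feas A b. frob (C + \<epsilon> *\<^sub>R Cb) X \<le> frob (C + \<epsilon> *\<^sub>R Cb) X'}"

definition dual_opt :: "real^'n^'n \<Rightarrow> real^'n^'n \<Rightarrow> ('m::finite \<Rightarrow> real^'n^'n) \<Rightarrow> real^'m \<Rightarrow> real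
      \<Rightarrow> ((real^'m) \<times> (real^'n^'n)) set" where
  "dual_opt C Cb A b \<epsilon> = {(y, S) \<in> dual_feas C Cb A \<epsilon>.
      \<forall>(y', S') \<in> dual_feas C Cb A \<epsilon>. b \<bullet> y' \<le> b \<bullet> y}"

definition max_compl :: "real^'n^'n \<Rightarrow> real^'n^'n \<Rightarrow> ('m::finite \<Rightarrow> real^'n^'n) \<Rightarrow> real^'m \<Rightarrow> real
      \<Rightarrow> real^'n^'n \<Rightarrow> real^'m \<Rightarrow> real^'n^'n \<Rightarrow> bool" where
  "max_compl C Cb A b \<epsilon> X y S \<longleftrightarrow>
      X \<in> rel_interior (primal_opt C Cb A b \<epsilon>) \<and> (y, S) \<in> rel_interior (dual_opt C Cb A b \<epsilon>)"

definition opt_partition :: "real^'n^'n \<Rightarrow> real^'n^'n \<Rightarrow> ('m::finite \<Rightarrow> real^'n^'n) \<Rightarrow> real^'m \<Rightarrow> real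
      \<Rightarrow> (real^'n) set \<times> (real^'n) set \<times> (real^'n) set" where
  "opt_partition C Cb A b \<epsilon> =
     (let (X, y, S) = (SOME (X, y, S). max_compl C Cb A b \<epsilon> X y S) in
       (col_space X,
        orthogonal_comp {u + v | u v. u \<in> col_space X \<and> v \<in> col_space S},
        col_space S))"

definition invariancy_set :: "real^'n^'n \<Rightarrow> real^'n^'n \<Rightarrow> ('m::finite \<Rightarrow> real^'n^'n) \<Rightarrow> real^'m
      \<Rightarrow> real set \<Rightarrow> bool" where
  "invariancy_set C Cb A b I \<longleftrightarrow>
     I \<noteq> {} \<and> I \<subseteq> interior (E_set C Cb A b) \<and>
     (\<forall>e1\<in>I. \<forall>e2\<in>I. opt_partition C Cb A b e1 = opt_partition C Cb A b e2) \<and>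
     (\<forall>J. I \<subseteq> J \<and> J \<subseteq> interior (E_set C Cb A b) \<and>
          (\<forall>e1\<in>J. \<forall>e2\<in>J. opt_partition C Cb A b e1 = opt_partition C Cb A b e2) \<longrightarrow> J = I)"

definition invariancy_interval :: "real^'n^'n \<Rightarrow> real^'n^'n \<Rightarrow> ('m::finite \<Rightarrow> real^'n^'n) \<Rightarrow> real^'m
      \<Rightarrow> real set \<Rightarrow> bool" where
  "invariancy_interval C Cb A b I \<longleftrightarrow>
     invariancy_set C Cb A b I \<and> open I \<and> is_interval I"

end

theory Submission
  imports Defs
begin

text \<open>Suppose the ranks of maximally complementary solutions at \<open>\<epsilon>hat \<in> I\<close> and at the boundary
  point \<open>\<epsilon>bar\<close> agree. Since the optimal partition is constant on \<open>I\<close>, every maximally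
  complementary dual slack on \<open>I\<close> has the column space of \<open>Shat\<close> and is therefore complementary to
  \<open>Xhat\<close>; so \<open>Xhat\<close> is optimal on \<open>I\<close> and, by closedness, at \<open>\<epsilon>bar\<close>, whence
  \<open>R(Xhat) \<subseteq> R(Xbar)\<close>. Dually, a convex combination of \<open>Shat\<close> and \<open>Sbar\<close> is complementary to \<open>Xhat\<close>,
  hence optimal at a point of \<open>I\<close> close to \<open>\<epsilon>hat\<close>, whence \<open>R(Sbar) \<subseteq> R(Shat)\<close>. Equal ranks make
  both inclusions equalities, so the partition at \<open>\<epsilon>bar\<close> is the one on \<open>I\<close>, and maximality of \<open>I\<close>
  puts \<open>\<epsilon>bar\<close> into the open set \<open>I\<close>, contradicting \<open>\<epsilon>bar \<in> frontier I\<close>.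
  Underneath lie strong duality with attained optima on the interior of \<open>E\<close> (a separation
  argument and a compactness argument, both driven by the Slater points) and the maximality of
  column spaces on the relative interior of the optimal sets.\<close>

subsection \<open>Symmetric matrices and the trace inner product\<close>

lemma symmetric_mat_iff: "symmetric_mat (M::real^'n^'n) \<longleftrightarrow> (\<forall>i j. M$i$j = M$j$i)"
  unfolding symmetric_mat_def transpose_def by (auto simp: vec_eq_iff)

lemma symmetric_mat_add: "symmetric_mat M \<Longrightarrow> symmetric_mat N \<Longrightarrow> symmetric_mat (M + N)"
  by (simp add: symmetric_mat_iff)

lemma symmetric_mat_diff: "symmetric_mat M \<Longrightarrow> symmetric_mat N \<Longrightarrow> symmetric_mat (M - N)"
  by (simp add: symmetric_mat_iff)

lemma symmetric_mat_scaleR: "symmetric_mat M \<Longrightarrow> symmetric_mat (c *\<^sub>R M)"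
  by (simp add: symmetric_mat_iff)

lemma symmetric_mat_sum:
  "(\<And>i. i \<in> F \<Longrightarrow> symmetric_mat (f i)) \<Longrightarrow> symmetric_mat (\<Sum>i\<in>F. f i)"
  by (induction F rule: infinite_finite_induct) (auto simp: symmetric_mat_add symmetric_mat_iff)

lemma symmetric_mat_inner:
  "symmetric_mat M \<Longrightarrow> v \<bullet> ((M::real^'n^'n) *v w) = (M *v v) \<bullet> w"
  by (metis dot_lmul_matrix symmetric_mat_def transpose_matrix_vector)

lemma frob_expand: "frob (M::real^'n^'n) N = (\<Sum>i\<in>UNIV. \<Sum>k\<in>UNIV. M$i$k * N$k$i)"
  by (simp add: frob_def trace_def matrix_matrix_mult_def)

lemma frob_commute: "frob M N = frob N M"
  unfolding frob_def by (rule trace_mul_sym)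

lemma frob_add_left: "frob (M + M') N = frob M N + frob M' N"
  by (simp add: frob_expand distrib_right sum.distrib)

lemma frob_add_right: "frob N (M + M') = frob N M + frob N M'"
  by (simp add: frob_expand distrib_left sum.distrib)

lemma frob_diff_left: "frob (M - M') N = frob M N - frob M' N"
  by (simp add: frob_expand left_diff_distrib sum_subtractf)

lemma frob_scaleR_left: "frob (c *\<^sub>R M) N = c * frob M N"
  by (simp add: frob_expand sum_distrib_left mult.assoc)

lemma frob_scaleR_right: "frob N (c *\<^sub>R M) = c * frob N M"
  by (simp add: frob_expand sum_distrib_left mult.left_commute)

lemma frob_sum_left: "frob (\<Sum>i\<in>F. f i) N = (\<Sum>i\<in>F. frob (f i) N)"
  by (induction F rule: infinite_finite_induct) (simp_all add: frob_add_left frob_expand[of 0])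

lemma frob_zero_right [simp]: "frob N 0 = 0"
  by (simp add: frob_expand)

lemma linear_frob: "linear (frob M)"
  by (rule linearI) (simp_all add: frob_add_right frob_scaleR_right)

lemma continuous_on_frob: "continuous_on S (frob M)"
  by (simp add: linear_continuous_on linear_frob linear_linear)

definition outer_prod :: "real^'n \<Rightarrow> real^'n^'n" where
  "outer_prod u = (\<chi> i j. u$i * u$j)"

lemma outer_prod_mult_vec: "outer_prod u *v w = (u \<bullet> w) *\<^sub>R u"
  by (simp add: outer_prod_def matrix_vector_mult_def vec_eq_iff inner_vec_def sum_distrib_left
      mult.commute mult.left_commute)

lemma symmetric_mat_outer_prod: "symmetric_mat (outer_prod u)"
  by (simp add: symmetric_mat_iff outer_prod_def mult.commute)

lemma outer_prod_scaleR: "outer_prod (c *\<^sub>R u) = (c * c) *\<^sub>R outer_prod u"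
  by (simp add: outer_prod_def vec_eq_iff)

lemma frob_outer_prod: "frob S (outer_prod u) = u \<bullet> (S *v u)"
proof -
  have "frob S (outer_prod u) = (\<Sum>i\<in>UNIV. u$i * (\<Sum>k\<in>UNIV. S$i$k * u$k))"
    by (simp add: frob_expand outer_prod_def sum_distrib_left mult_ac)
  also have "\<dots> = u \<bullet> (S *v u)"
    by (simp add: inner_vec_def matrix_vector_mult_def)
  finally show ?thesis .
qed

lemma trace_outer_prod: "trace (outer_prod u) = u \<bullet> u"
  by (simp add: trace_def outer_prod_def inner_vec_def)

subsection \<open>Column spaces\<close>

lemma subspace_col_space: "subspace (col_space (M::real^'n^'n))"
  unfolding col_space_def by (simp add: subspace_UNIV linear_subspace_image)

lemma col_space_eq_null_space_perp:
  assumes "symmetric_mat (M::real^'n^'n)"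
  shows "col_space M = {w. M *v w = 0}\<^sup>\<bottom>"
proof -
  have "(col_space M)\<^sup>\<bottom> = {w. M *v w = 0}"
  proof (intro set_eqI iffI)
    fix w assume "w \<in> (col_space M)\<^sup>\<bottom>"
    then have "(M *v (M *v w)) \<bullet> w = 0"
      by (auto simp: orthogonal_comp_def orthogonal_def col_space_def)
    then show "w \<in> {w. M *v w = 0}"
      using symmetric_mat_inner[OF assms, of "M *v w" w] by (simp add: inner_commute)
  next
    fix w assume "w \<in> {w. M *v w = 0}"
    then have "(M *v v) \<bullet> w = 0" for v
      using symmetric_mat_inner[OF assms, of w v] by (simp add: inner_commute)
    then show "w \<in> (col_space M)\<^sup>\<bottom>"
      by (auto simp: orthogonal_comp_def orthogonal_def col_space_def)
  qed
  then show ?thesis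
    using orthogonal_comp_self[OF subspace_col_space] by metis
qed

lemma col_space_subset_if_null_space_subset:
  assumes "symmetric_mat M" "symmetric_mat N" "\<And>w. M *v w = 0 \<Longrightarrow> (N::real^'n^'n) *v w = 0"
  shows "col_space N \<subseteq> col_space M"
  unfolding col_space_eq_null_space_perp[OF assms(1)] col_space_eq_null_space_perp[OF assms(2)]
  using assms(3) by (intro orthogonal_comp_anti_mono) auto

lemma col_space_eq_if_rank_eq:
  assumes "col_space N \<subseteq> col_space (M::real^'n^'n)" "rank N = rank M"
  shows "col_space N = col_space M"
  using assms subspace_dim_equal[OF subspace_col_space subspace_col_space, of N M]
  by (simp add: rank_dim_range col_space_def)

lemma rank_less_if_col_space_psubset:
  "col_space N \<subset> col_space (M::real^'n^'n) \<Longrightarrow> rank N < rank M"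
  by (metis dim_psubset span_eq_iff subspace_col_space rank_dim_range col_space_def)

subsection \<open>Positive semidefinite matrices\<close>

lemma pd_imp_psd: "pd X \<Longrightarrow> psd X"
  unfolding pd_def psd_def by (metis inner_zero_left less_le order_refl)

lemma psd_zero: "psd (0::real^'n^'n)"
  by (simp add: psd_def symmetric_mat_iff)

lemma psd_outer_prod: "psd (outer_prod u)"
  by (simp add: psd_def symmetric_mat_outer_prod outer_prod_mult_vec inner_commute)

lemma quadratic_form_comb:
  "v \<bullet> ((a *\<^sub>R X + c *\<^sub>R Y) *v v) = a * (v \<bullet> (X *v v)) + c * (v \<bullet> ((Y::real^'n^'n) *v v))"
  by (simp add: algebra_simps scaleR_matrix_vector_assoc[symmetric])

lemma psd_comb:
  assumes "psd X" "psd Y" "0 \<le> a" "0 \<le> c"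
  shows "psd (a *\<^sub>R X + c *\<^sub>R (Y::real^'n^'n))"
  unfolding psd_def
proof (intro conjI allI)
  show "symmetric_mat (a *\<^sub>R X + c *\<^sub>R Y)"
    using assms(1,2) by (simp add: psd_def symmetric_mat_add symmetric_mat_scaleR)
  fix v
  have "0 \<le> v \<bullet> (X *v v)" "0 \<le> v \<bullet> (Y *v v)" using assms(1,2) by (simp_all add: psd_def)
  then show "0 \<le> v \<bullet> ((a *\<^sub>R X + c *\<^sub>R Y) *v v)"
    using assms(3,4) by (simp add: quadratic_form_comb)
qed

lemma psd_scaleR: "psd X \<Longrightarrow> 0 \<le> c \<Longrightarrow> psd (c *\<^sub>R (X::real^'n^'n))"
  using psd_comb[of X 0 c 0] psd_zero by simp

lemma convex_psd: "convex {X::real^'n^'n. psd X}"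
  by (auto intro!: convexI psd_comb)

lemma pd_comb:
  assumes "pd X" "psd Y" "0 < a" "0 \<le> c"
  shows "pd (a *\<^sub>R X + c *\<^sub>R (Y::real^'n^'n))"
  unfolding pd_def
proof (intro conjI allI impI)
  show "symmetric_mat (a *\<^sub>R X + c *\<^sub>R Y)"
    using assms(1,2) by (simp add: pd_def psd_def symmetric_mat_add symmetric_mat_scaleR)
  fix v :: "real^'n" assume "v \<noteq> 0"
  then have "0 < v \<bullet> (X *v v)" "0 \<le> v \<bullet> (Y *v v)" using assms(1,2) by (simp_all add: pd_def psd_def)
  then show "0 < v \<bullet> ((a *\<^sub>R X + c *\<^sub>R Y) *v v)"
    using assms(3,4) by (simp add: quadratic_form_comb add_pos_nonneg)
qed

text \<open>A vector on which a psd form vanishes is a minimum of the form, so the gradient \<open>2 M v\<close>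
  vanishes there; concretely, the form would turn negative along \<open>v + r M v\<close> for small \<open>r < 0\<close>.\<close>

lemma psd_quadratic_form_eq_0D:
  assumes "psd M" "v \<bullet> ((M::real^'n^'n) *v v) = 0"
  shows "M *v v = 0"
proof (rule ccontr)
  assume "M *v v \<noteq> 0"
  define w where "w = M *v v"
  define a where "a = w \<bullet> w"
  define c where "c = w \<bullet> (M *v w)"
  have sym: "symmetric_mat M" and form_nonneg: "\<And>z. 0 \<le> z \<bullet> (M *v z)"
    using assms(1) by (auto simp: psd_def)
  have "a > 0" using \<open>M *v v \<noteq> 0\<close> by (simp add: a_def w_def)
  have "c \<ge> 0" using form_nonneg by (simp add: c_def)
  have along_w: "0 \<le> r * (2 * a + r * c)" for r
  proof -
    have "0 \<le> (v + r *\<^sub>R w) \<bullet> (M *v (v + r *\<^sub>R w))" by (rule form_nonneg)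
    also have "\<dots> = v \<bullet> (M *v v) + r * (v \<bullet> (M *v w)) + r * (w \<bullet> (M *v v)) + r * r * c"
      by (simp add: algebra_simps c_def inner_add_left inner_add_right)
    also have "v \<bullet> (M *v w) = w \<bullet> w" using symmetric_mat_inner[OF sym, of v w] by (simp add: w_def)
    finally show ?thesis using assms(2) by (simp add: a_def w_def algebra_simps)
  qed
  define r where "r = - a / (c + 1)"
  have "r < 0" using \<open>a > 0\<close> \<open>c \<ge> 0\<close> by (simp add: r_def divide_neg_pos)
  moreover have "r * c \<ge> - a"
  proof -
    have "a * c \<le> a * (c + 1)" using \<open>a > 0\<close> by simp
    then show ?thesis using \<open>c \<ge> 0\<close> by (simp add: r_def divide_le_eq)
  qed
  ultimately have "r * (2 * a + r * c) < 0" using \<open>a > 0\<close> by (intro mult_neg_pos) linarith+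
  with along_w show False by (meson not_le)
qed

lemma psd_quadratic_form_nonneg: "psd M \<Longrightarrow> 0 \<le> v \<bullet> (M *v v)"
  by (simp add: psd_def)

text \<open>The maximum of the Rayleigh quotient on the unit sphere is an eigenvalue.\<close>

lemma symmetric_mat_top_eigenvector:
  fixes X :: "real^'n^'n"
  assumes "symmetric_mat X"
  obtains v lam where "norm v = 1" "X *v v = lam *\<^sub>R v" "\<And>z. z \<bullet> (X *v z) \<le> lam * (z \<bullet> z)"
proof -
  have "(axis undefined 1 :: real^'n) \<in> sphere 0 1" by simp
  then have "sphere (0::real^'n) 1 \<noteq> {}" by blast
  moreover have "continuous_on (sphere 0 1) (\<lambda>z. z \<bullet> (X *v z))"
    by (intro continuous_intros linear_continuous_on matrix_vector_mul_linear[unfolded linear_conv_bounded_linear])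
  ultimately have "\<exists>v\<in>sphere 0 1. \<forall>z\<in>sphere 0 1. z \<bullet> (X *v z) \<le> v \<bullet> (X *v v)"
    by (intro continuous_attains_sup) simp_all
  then obtain v where v: "v \<in> sphere 0 1" and v_max: "\<forall>z\<in>sphere 0 1. z \<bullet> (X *v z) \<le> v \<bullet> (X *v v)"
    by blast
  define lam where "lam = v \<bullet> (X *v v)"
  have bound: "z \<bullet> (X *v z) \<le> lam * (z \<bullet> z)" for z
  proof (cases "z = 0")
    case False
    define z' where "z' = (1 / norm z) *\<^sub>R z"
    have "z' \<in> sphere 0 1" using False by (simp add: z'_def)
    then have "z' \<bullet> (X *v z') \<le> lam" using v_max lam_def by blast
    moreover have "z' \<bullet> (X *v z') = (z \<bullet> (X *v z)) / (z \<bullet> z)"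
      by (simp add: z'_def matrix_vector_mult_scaleR power2_norm_eq_inner[symmetric] power2_eq_square)
    moreover have "z \<bullet> z > 0" using False by simp
    ultimately show ?thesis by (simp add: divide_le_eq)
  qed simp
  have "norm v = 1" using v by simp
  define M where "M = lam *\<^sub>R mat 1 - X"
  have M_mult: "M *v z = lam *\<^sub>R z - X *v z" for z
    by (simp add: M_def algebra_simps scaleR_matrix_vector_assoc[symmetric])
  have "symmetric_mat M"
    unfolding M_def using assms by (intro symmetric_mat_diff symmetric_mat_scaleR) (simp add: symmetric_mat_iff mat_def)
  then have "psd M"
    using bound by (simp add: psd_def M_mult inner_diff_right)
  moreover have "v \<bullet> (M *v v) = 0"
    using \<open>norm v = 1\<close> by (simp add: M_mult inner_diff_right lam_def norm_eq_1)
  ultimately have "M *v v = 0" by (rule psd_quadratic_form_eq_0D)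
  then have "X *v v = lam *\<^sub>R v" by (simp add: M_mult)
  with \<open>norm v = 1\<close> bound that show thesis by blast
qed

lemma pd_quadratic_form_lower_bound:
  assumes "pd (S::real^'n^'n)"
  obtains \<mu> where "\<mu> > 0" "\<And>w. \<mu> * (w \<bullet> w) \<le> w \<bullet> (S *v w)"
proof -
  have "symmetric_mat (- S)" using assms by (simp add: pd_def symmetric_mat_iff)
  then obtain v lam where v: "norm v = 1" "(- S) *v v = lam *\<^sub>R v"
    and bound: "\<And>z. z \<bullet> ((- S) *v z) \<le> lam * (z \<bullet> z)"
    using symmetric_mat_top_eigenvector by blast
  have neg_mult: "(- S) *v z = - (S *v z)" for z
    by (simp add: matrix_vector_mult_def vec_eq_iff sum_negf)
  have "S *v v = (- lam) *\<^sub>R v" using v(2) by (simp add: neg_mult) (metis minus_minus)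
  then have "v \<bullet> (S *v v) = - lam" using v(1) by (simp add: norm_eq_1)
  moreover have "v \<bullet> (S *v v) > 0" using assms v(1) unfolding pd_def by (metis norm_zero zero_neq_one)
  ultimately have "- lam > 0" by simp
  moreover have "- lam * (w \<bullet> w) \<le> w \<bullet> (S *v w)" for w
    using bound[of w] by (simp add: neg_mult)
  ultimately show thesis by (rule that)
qed

lemma deflation_mult_vec:
  "(X - lam *\<^sub>R outer_prod v) *v z = X *v z - (lam * (v \<bullet> z)) *\<^sub>R v"
  by (simp add: algebra_simps scaleR_matrix_vector_assoc[symmetric] outer_prod_mult_vec)

lemma deflation_eigenvector:
  assumes "norm v = 1" "X *v v = lam *\<^sub>R v"
  shows "(X - lam *\<^sub>R outer_prod v) *v v = 0"
  using assms by (simp add: deflation_mult_vec norm_eq_1)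

lemma symmetric_mat_deflation:
  "symmetric_mat X \<Longrightarrow> symmetric_mat (X - lam *\<^sub>R outer_prod v)"
  by (intro symmetric_mat_diff symmetric_mat_scaleR symmetric_mat_outer_prod)

lemma psd_deflation:
  fixes X :: "real^'n^'n"
  assumes X_psd: "psd X" and "norm v = 1" "X *v v = lam *\<^sub>R v"
  shows "psd (X - lam *\<^sub>R outer_prod v)"
  unfolding psd_def
proof (intro conjI allI)
  let ?X' = "X - lam *\<^sub>R outer_prod v"
  show sym: "symmetric_mat ?X'" using X_psd by (simp add: psd_def symmetric_mat_deflation)
  have X'v: "?X' *v v = 0" using assms(2,3) by (rule deflation_eigenvector)
  fix z
  define z' where "z' = z - (v \<bullet> z) *\<^sub>R v"
  have "v \<bullet> z' = 0" using \<open>norm v = 1\<close> by (simp add: z'_def inner_diff_right norm_eq_1)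
  have "?X' *v z = ?X' *v z'"
    by (simp add: z'_def matrix_vector_mult_diff_distrib matrix_vector_mult_scaleR X'v)
  have "v \<bullet> (?X' *v z') = 0"
    using symmetric_mat_inner[OF sym, of v z'] X'v by simp
  then have "(z - z') \<bullet> (?X' *v z') = 0" by (simp add: z'_def)
  then have "z \<bullet> (?X' *v z) = z' \<bullet> (?X' *v z')"
    using \<open>?X' *v z = ?X' *v z'\<close> by (simp add: inner_diff_left)
  also have "\<dots> = z' \<bullet> (X *v z')"
    by (simp add: deflation_mult_vec inner_diff_right inner_commute \<open>v \<bullet> z' = 0\<close>)
  finally show "0 \<le> z \<bullet> (?X' *v z)" using X_psd by (simp add: psd_def)
qed

lemma rank_deflation:
  fixes X :: "real^'n^'n"
  assumes "symmetric_mat X" "norm v = 1" "X *v v = lam *\<^sub>R v" "lam \<noteq> 0"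
  shows "rank (X - lam *\<^sub>R outer_prod v) < rank X"
proof (rule rank_less_if_col_space_psubset)
  let ?X' = "X - lam *\<^sub>R outer_prod v"
  have X'v: "?X' *v v = 0" using assms(2,3) by (rule deflation_eigenvector)
  have "col_space ?X' \<subseteq> col_space X"
  proof
    fix y assume "y \<in> col_space ?X'"
    then obtain z where "y = ?X' *v z" by (auto simp: col_space_def)
    then have "y = X *v (z - (v \<bullet> z) *\<^sub>R v)"
      using assms(3) by (simp add: deflation_mult_vec matrix_vector_mult_diff_distrib matrix_vector_mult_scaleR)
    then show "y \<in> col_space X" by (auto simp: col_space_def)
  qed
  moreover have "v \<in> col_space X"
  proof -
    have "X *v ((1 / lam) *\<^sub>R v) = v" using assms(3,4) by (simp add: matrix_vector_mult_scaleR)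
    then show ?thesis unfolding col_space_def by (metis rangeI)
  qed
  moreover have "v \<notin> col_space ?X'"
  proof
    assume "v \<in> col_space ?X'"
    then obtain z where "v = ?X' *v z" by (auto simp: col_space_def)
    then have "v \<bullet> v = (?X' *v v) \<bullet> z"
      using symmetric_mat_inner[OF symmetric_mat_deflation[OF assms(1), of lam v], of v z] by simp
    then show False using X'v \<open>norm v = 1\<close> by (simp add: norm_eq_1)
  qed
  ultimately show "col_space ?X' \<subset> col_space X" by blast
qed

lemma psd_eq_sum_list_outer_prod:
  fixes X :: "real^'n^'n"
  assumes "psd X"
  obtains us where "X = sum_list (map outer_prod us)"
  using assms
proof (induction "rank X" arbitrary: X thesis rule: less_induct)
  case less
  show ?case
  proof (cases "X = 0")
    case True
    then show ?thesis using less.prems(1)[of "[]"] by simp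
  next
    case False
    obtain v lam where v: "norm v = 1" and eigen: "X *v v = lam *\<^sub>R v"
      and bound: "\<And>z. z \<bullet> (X *v z) \<le> lam * (z \<bullet> z)"
      using symmetric_mat_top_eigenvector less.prems(2) by (metis psd_def)
    have "lam > 0"
    proof (rule ccontr)
      assume "\<not> lam > 0"
      moreover have "0 \<le> lam" using psd_quadratic_form_nonneg[OF less.prems(2), of v] v eigen
        by (simp add: norm_eq_1)
      ultimately have "z \<bullet> (X *v z) = 0" for z
        using bound[of z] psd_quadratic_form_nonneg[OF less.prems(2), of z] by simp
      then have "X = 0"
        using psd_quadratic_form_eq_0D[OF less.prems(2)] by (simp add: matrix_eq)
      with False show False by simp
    qed
    define X' where "X' = X - lam *\<^sub>R outer_prod v"
    have "psd X'" using psd_deflation[OF less.prems(2) v eigen] by (simp add: X'_def)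
    moreover have "rank X' < rank X"
      using rank_deflation[OF _ v eigen] less.prems(2) \<open>lam > 0\<close> by (simp add: X'_def psd_def)
    ultimately obtain us where "X' = sum_list (map outer_prod us)" using less.hyps by blast
    then have "X = sum_list (map outer_prod (sqrt lam *\<^sub>R v # us))"
      using \<open>lam > 0\<close> by (simp add: outer_prod_scaleR X'_def algebra_simps)
    then show ?thesis by (rule less.prems(1))
  qed
qed

lemma frob_sum_list_outer_prod:
  "frob S (sum_list (map outer_prod us)) = (\<Sum>u\<leftarrow>us. u \<bullet> (S *v u))"
  by (induction us) (simp_all add: frob_add_right frob_outer_prod)

lemma trace_sum_list_outer_prod: "trace (sum_list (map outer_prod us)) = (\<Sum>u\<leftarrow>us. u \<bullet> u)"
  by (induction us) (simp add: trace_def, simp add: trace_add trace_outer_prod)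

lemma frob_psd_nonneg:
  assumes "psd S" "psd (X::real^'n^'n)"
  shows "0 \<le> frob S X"
proof -
  obtain us where X: "X = sum_list (map outer_prod us)" using psd_eq_sum_list_outer_prod assms(2) by blast
  show ?thesis
    unfolding X frob_sum_list_outer_prod using assms(1)
    by (induction us) (simp_all add: psd_quadratic_form_nonneg)
qed

lemma frob_psd_eq_0_imp_mult_eq_0:
  assumes "psd S" "psd (X::real^'n^'n)" "frob S X = 0"
  shows "S ** X = 0"
proof -
  obtain us where X: "X = sum_list (map outer_prod us)" using psd_eq_sum_list_outer_prod assms(2) by blast
  have "(\<Sum>u\<leftarrow>us. u \<bullet> (S *v u)) = 0" using assms(3) by (simp add: X frob_sum_list_outer_prod)
  then have "\<forall>u\<in>set us. u \<bullet> (S *v u) = 0"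
    using sum_list_nonneg_eq_0_iff[of "map (\<lambda>u. u \<bullet> (S *v u)) us"]
      psd_quadratic_form_nonneg[OF assms(1)] by auto
  then have "\<forall>u\<in>set us. S *v u = 0" using psd_quadratic_form_eq_0D[OF assms(1)] by blast
  then have "(S ** X) *v z = 0" for z
    unfolding X matrix_vector_mul_assoc[symmetric]
    by (induction us) (simp_all add: matrix_vector_mult_add_rdistrib matrix_vector_right_distrib outer_prod_mult_vec
        matrix_vector_mult_scaleR)
  then show ?thesis by (simp add: matrix_eq)
qed

lemma psd_entry_bound:
  assumes "psd (X::real^'n^'n)"
  shows "\<bar>X$i$k\<bar> \<le> trace X"
proof -
  obtain us where X: "X = sum_list (map outer_prod us)" using psd_eq_sum_list_outer_prod assms by blast
  have "\<bar>u$i * u$k\<bar> \<le> u \<bullet> u" for u :: "real^'n"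
  proof -
    have "\<bar>u$i * u$k\<bar> \<le> norm u * norm u"
      unfolding abs_mult by (intro mult_mono component_le_norm_cart) auto
    then show ?thesis by (simp add: power2_norm_eq_inner[symmetric] power2_eq_square)
  qed
  then have "\<bar>\<Sum>u\<leftarrow>us. u$i * u$k\<bar> \<le> (\<Sum>u\<leftarrow>us. u \<bullet> u)"
    by (induction us) (auto intro: order_trans[OF abs_triangle_ineq] add_mono)
  moreover have "X$i$k = (\<Sum>u\<leftarrow>us. u$i * u$k)"
    unfolding X by (induction us) (simp_all add: outer_prod_def)
  ultimately show ?thesis by (simp add: X trace_sum_list_outer_prod)
qed

lemma pd_frob_lower_bound:
  assumes "pd (S::real^'n^'n)"
  obtains \<mu> where "\<mu> > 0" "\<And>X. psd X \<Longrightarrow> \<mu> * trace X \<le> frob S X"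
proof -
  obtain \<mu> where "\<mu> > 0" and bound: "\<And>w. \<mu> * (w \<bullet> w) \<le> w \<bullet> (S *v w)"
    using pd_quadratic_form_lower_bound[OF assms] by blast
  have "\<mu> * (\<Sum>u\<leftarrow>us. u \<bullet> u) \<le> (\<Sum>u\<leftarrow>us. u \<bullet> (S *v u))" for us
    by (induction us) (simp_all add: distrib_left add_mono bound)
  then have "\<mu> * trace X \<le> frob S X" if "psd X" for X
    using psd_eq_sum_list_outer_prod[OF that]
    by (metis frob_sum_list_outer_prod trace_sum_list_outer_prod)
  with \<open>\<mu> > 0\<close> show thesis by (rule that)
qed

lemma psd_if_frob_bounded_below:
  assumes "symmetric_mat S" "\<And>X. psd X \<Longrightarrow> c \<le> frob S (X::real^'n^'n)"
  shows "psd S"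
  unfolding psd_def
proof (intro conjI allI assms(1))
  fix w
  show "0 \<le> w \<bullet> (S *v w)"
  proof (rule ccontr)
    assume "\<not> 0 \<le> w \<bullet> (S *v w)"
    then have neg: "w \<bullet> (S *v w) < 0" by simp
    define k where "k = (\<bar>c\<bar> + 1) / - (w \<bullet> (S *v w))"
    have "k \<ge> 0" using neg unfolding k_def by (intro divide_nonneg_pos) auto
    then have "c \<le> frob S (k *\<^sub>R outer_prod w)" by (intro assms(2) psd_scaleR psd_outer_prod)
    also have "\<dots> = k * (w \<bullet> (S *v w))" by (simp only: frob_scaleR_right frob_outer_prod)
    also have "\<dots> = - (\<bar>c\<bar> + 1)" using neg by (simp add: k_def)
    finally show False by simp
  qed
qed

lemma frob_eq_0_if_col_spaces_orthogonal:
  assumes "symmetric_mat (X::real^'n^'n)" "\<And>a c. (X *v a) \<bullet> (S *v c) = 0"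
  shows "frob X S = 0"
proof -
  have "(\<Sum>k\<in>UNIV. X$i$k * S$k$i) = (X *v axis i 1) \<bullet> (S *v axis i 1)" for i
    using assms(1) by (simp add: matrix_vector_mult_basis column_def inner_vec_def symmetric_mat_iff)
  then show ?thesis unfolding frob_expand using assms(2) by simp
qed

lemma frob_psd_eq_0_imp_col_spaces_orthogonal:
  assumes "psd S" "psd (X::real^'n^'n)" "frob S X = 0"
  shows "(X *v a) \<bullet> (S *v c) = 0"
proof -
  have "S *v (X *v a) = 0"
    using frob_psd_eq_0_imp_mult_eq_0[OF assms] by (simp add: matrix_vector_mul_assoc)
  moreover have "(X *v a) \<bullet> (S *v c) = (S *v (X *v a)) \<bullet> c"
    using symmetric_mat_inner[of S "X *v a" c] assms(1) by (simp add: psd_def)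
  ultimately show ?thesis by simp
qed

subsection \<open>Weak duality and the separation argument\<close>

lemma primal_dual_gap:
  assumes "X \<in> primal_feas A b" "(y, S) \<in> dual_feas C Cb A \<epsilon>"
  shows "frob (C + \<epsilon> *\<^sub>R Cb) X = b \<bullet> y + frob S X"
proof -
  have "C + \<epsilon> *\<^sub>R Cb = (\<Sum>i\<in>UNIV. y$i *\<^sub>R A i) + S" using assms(2) by (simp add: dual_feas_def)
  then have "frob (C + \<epsilon> *\<^sub>R Cb) X = (\<Sum>i\<in>UNIV. y$i * frob (A i) X) + frob S X"
    by (simp add: frob_add_left frob_sum_left frob_scaleR_left)
  also have "(\<Sum>i\<in>UNIV. y$i * frob (A i) X) = b \<bullet> y"
    using assms(1) by (simp add: primal_feas_def inner_vec_def mult.commute)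
  finally show ?thesis .
qed

lemma weak_duality:
  assumes "X \<in> primal_feas A b" "(y, S) \<in> dual_feas C Cb A \<epsilon>"
  shows "b \<bullet> y \<le> frob (C + \<epsilon> *\<^sub>R Cb) X"
  using primal_dual_gap[OF assms] frob_psd_nonneg[of S X] assms
  by (simp add: primal_feas_def dual_feas_def)

lemma independent_range_sum_eq_0:
  fixes A :: "'m::finite \<Rightarrow> 'a::real_vector"
  assumes "inj A" "independent (range A)" "(\<Sum>i\<in>UNIV. c i *\<^sub>R A i) = 0"
  shows "c i = 0"
proof -
  have "(\<Sum>v\<in>range A. c (inv A v) *\<^sub>R v) = 0"
    using assms(1,3) by (simp add: sum.reindex)
  then have "c (inv A (A i)) = 0"
    using independentD[OF assms(2) finite_imageI[OF finite] order_refl, where u = "\<lambda>v. c (inv A v)"] by blast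
  then show ?thesis using assms(1) by simp
qed

lemma nonpos_if_le_on_negative_ray:
  fixes a \<beta> :: real
  assumes ray: "\<And>t. t < 0 \<Longrightarrow> \<beta> \<le> a * t"
  shows "a \<le> 0" "\<beta> \<le> 0"
proof -
  show "a \<le> 0"
  proof (rule ccontr)
    assume "\<not> a \<le> 0"
    then have "\<beta> \<le> a * (- (\<bar>\<beta>\<bar> + 1) / a)" by (intro ray) (simp add: divide_neg_pos)
    then show False using \<open>\<not> a \<le> 0\<close> by simp
  qed
  show "\<beta> \<le> 0"
  proof (rule ccontr)
    assume "\<not> \<beta> \<le> 0"
    show False
    proof (cases "a = 0")
      case True
      then show False using ray[of "-1"] \<open>\<not> \<beta> \<le> 0\<close> by simp
    next
      case False
      then have "a < 0" using \<open>a \<le> 0\<close> by simp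
      then have "\<beta> \<le> a * (\<beta> / (2 * a))" using \<open>\<not> \<beta> \<le> 0\<close> by (intro ray) (simp add: divide_pos_neg)
      then show False using \<open>a < 0\<close> \<open>\<not> \<beta> \<le> 0\<close> by simp
    qed
  qed
qed

text \<open>Separate the image of the psd cone under \<open>X \<mapsto> (\<A> X - b, \<langle>C\<^sub>\<epsilon>, X\<rangle> - L)\<close> from the
  open ray \<open>{0} \<times> (-\<infinity>, 0)\<close>; the normal \<open>(y, -c)\<close> of the separating hyperplane is a
  (possibly degenerate) dual certificate.\<close>

lemma sdp_separation:
  fixes Ce :: "real^'n^'n" and A :: "'m::finite \<Rightarrow> real^'n^'n" and b :: "real^'m"
  assumes lower: "\<And>X. X \<in> primal_feas A b \<Longrightarrow> L \<le> frob Ce X"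
  obtains y c where "(y, c) \<noteq> 0" "0 \<le> c"
    "\<And>X. psd X \<Longrightarrow> frob (\<Sum>i\<in>UNIV. y$i *\<^sub>R A i) X - b \<bullet> y \<le> c * (frob Ce X - L)"
proof -
  define Aop where "Aop X = (\<chi> i. frob (A i) X)" for X
  have inner_Aop: "y \<bullet> Aop X = frob (\<Sum>i\<in>UNIV. y$i *\<^sub>R A i) X" for y X
    by (simp add: Aop_def inner_vec_def frob_sum_left frob_scaleR_left)
  define W where "W = (\<lambda>p. p - (b, L)) ` (\<lambda>X. (Aop X, frob Ce X)) ` {X. psd X}"
  define T :: "((real^'m) \<times> real) set" where "T = {0} \<times> {..<0}"
  have "linear (\<lambda>X. (Aop X, frob Ce X))"
    by (rule linearI) (simp_all add: Aop_def vec_eq_iff frob_add_right frob_scaleR_right)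
  then have "convex W"
    unfolding W_def by (intro convex_translation_subtract convex_linear_image convex_psd)
  moreover have "convex T" unfolding T_def by (intro convex_Times convex_singleton) simp
  moreover have "W \<noteq> {}" "T \<noteq> {}" using psd_zero by (auto simp: W_def T_def)
  moreover have "W \<inter> T = {}"
  proof -
    have False if "psd X" "Aop X = b" "frob Ce X < L" for X
    proof -
      have "X \<in> primal_feas A b"
        using that by (auto simp: primal_feas_def psd_def Aop_def vec_eq_iff)
      with lower that(3) show False by fastforce
    qed
    then show ?thesis by (force simp: W_def T_def)
  qed
  ultimately obtain a \<beta> where "a \<noteq> 0" and on_W: "\<forall>x\<in>W. a \<bullet> x \<le> \<beta>" and on_T: "\<forall>x\<in>T. \<beta> \<le> a \<bullet> x"
    using separating_hyperplane_sets by metis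
  obtain y a0 where a: "a = (y, a0)" by (cases a)
  have ray: "\<beta> \<le> a0 * t" if "t < 0" for t
    using on_T that unfolding T_def a by auto
  note nonpos = nonpos_if_le_on_negative_ray[OF ray]
  show thesis
  proof (rule that[of y "- a0"])
    show "(y, - a0) \<noteq> 0" using \<open>a \<noteq> 0\<close> by (simp add: a zero_prod_def)
    show "0 \<le> - a0" using nonpos(1) by simp
    fix X :: "real^'n^'n" assume "psd X"
    then have "a \<bullet> (Aop X - b, frob Ce X - L) \<le> \<beta>" using on_W by (auto simp: W_def)
    then show "frob (\<Sum>i\<in>UNIV. y$i *\<^sub>R A i) X - b \<bullet> y \<le> - a0 * (frob Ce X - L)"
      using nonpos(2) by (simp add: a inner_diff_right inner_Aop inner_commute algebra_simps)
  qed
qed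

text \<open>This is what rules out the degenerate (vertical) separating hyperplane under primal Slater.\<close>

lemma frob_max_at_pd_imp_zero:
  fixes Z :: "real^'n^'n"
  assumes "symmetric_mat Z" "pd X0" and max: "\<And>X. psd X \<Longrightarrow> frob Z X \<le> frob Z X0"
  shows "Z = 0"
proof -
  have "psd X0" using assms(2) by (rule pd_imp_psd)
  have "frob Z X0 = 0"
    using max[OF psd_zero] max[OF psd_scaleR[OF \<open>psd X0\<close>, of 2]] by (simp add: frob_scaleR_right)
  have neg_mult: "(- Z) *v w = - (Z *v w)" for w
    by (simp add: matrix_vector_mult_def vec_eq_iff sum_negf)
  have "psd (- Z)"
    unfolding psd_def
  proof (intro conjI allI)
    show "symmetric_mat (- Z)" using assms(1) by (simp add: symmetric_mat_iff)
    fix w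
    show "0 \<le> w \<bullet> ((- Z) *v w)"
      using max[OF psd_outer_prod, of w] \<open>frob Z X0 = 0\<close> by (simp add: frob_outer_prod neg_mult)
  qed
  moreover have "frob X0 (- Z) = 0"
    using \<open>frob Z X0 = 0\<close> frob_commute[of X0 Z] frob_scaleR_right[of X0 "-1" Z] by simp
  ultimately have "X0 ** (- Z) = 0" using frob_psd_eq_0_imp_mult_eq_0 \<open>psd X0\<close> by blast
  have "(- Z) *v w = 0" for w
  proof (rule ccontr)
    assume "(- Z) *v w \<noteq> 0"
    moreover have "X0 *v ((- Z) *v w) = 0"
      using \<open>X0 ** (- Z) = 0\<close> by (simp add: matrix_vector_mul_assoc)
    ultimately show False using assms(2) by (auto simp: pd_def)
  qed
  then show "Z = 0" by (simp add: matrix_eq neg_mult)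
qed

subsection \<open>Existence of optimal solutions and strong duality\<close>

lemma closed_primal_feas: "closed (primal_feas A b)"
proof -
  have "primal_feas A b = (\<Inter>i. \<Inter>j. {X. X$i$j = X$j$i}) \<inter> (\<Inter>v. {X. 0 \<le> v \<bullet> (X *v v)})
          \<inter> (\<Inter>i. {X. frob (A i) X = b$i})"
    by (auto simp: primal_feas_def psd_def symmetric_mat_iff)
  moreover have "continuous_on UNIV (\<lambda>X::real^'n^'n. X$i$j)" for i j
    by (intro continuous_intros)
  moreover have "continuous_on UNIV (\<lambda>X::real^'n^'n. v \<bullet> (X *v v))" for v
    by (simp add: inner_vec_def matrix_vector_mult_def continuous_intros)
  ultimately show ?thesis
    by (auto intro!: closed_Int closed_INT closed_Collect_eq closed_Collect_le continuous_on_frob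
        continuous_on_const)
qed

text \<open>A positive definite dual slack bounds the trace, hence every entry, of the primal solutions
  that are at least as good as a given one; minimise over that compact set.\<close>

lemma primal_opt_nonempty_if_dual_pd:
  fixes C Cb :: "real^'n^'n"
  assumes "X0 \<in> primal_feas A b" "pd S1" "(\<Sum>i\<in>UNIV. y1 $ i *\<^sub>R A i) + S1 = C + \<epsilon> *\<^sub>R Cb"
  shows "primal_opt C Cb A b \<epsilon> \<noteq> {}"
proof -
  define f where "f = frob (C + \<epsilon> *\<^sub>R Cb)"
  define K where "K = {X \<in> primal_feas A b. f X \<le> f X0}"
  have dual: "(y1, S1) \<in> dual_feas C Cb A \<epsilon>" using assms(2,3) pd_imp_psd by (auto simp: dual_feas_def)
  obtain \<mu> where "\<mu> > 0" and trace_bound: "\<And>X. psd X \<Longrightarrow> \<mu> * trace X \<le> frob S1 X"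
    using pd_frob_lower_bound[OF assms(2)] by blast
  define R where "R = (f X0 - b \<bullet> y1) / \<mu>"
  have entry_bound: "\<bar>X$i$k\<bar> \<le> R" if "X \<in> K" for X i k
  proof -
    have "psd X" using that by (simp add: K_def primal_feas_def)
    have "f X = b \<bullet> y1 + frob S1 X"
      using primal_dual_gap[OF _ dual] that by (simp add: K_def f_def)
    then have "\<mu> * trace X \<le> f X0 - b \<bullet> y1" using that trace_bound[OF \<open>psd X\<close>] by (simp add: K_def)
    then have "trace X \<le> R" using \<open>\<mu> > 0\<close> by (simp add: R_def le_divide_eq mult.commute)
    then show ?thesis using psd_entry_bound[OF \<open>psd X\<close>, of i k] by linarith
  qed
  have "norm X \<le> (\<Sum>i\<in>(UNIV::'n set). \<Sum>k\<in>(UNIV::'n set). R)" if "X \<in> K" for X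
  proof -
    have "norm X \<le> (\<Sum>i\<in>UNIV. norm (X$i))" unfolding norm_vec_def by (rule L2_set_le_sum) simp
    also have "\<dots> \<le> (\<Sum>i\<in>UNIV. \<Sum>k\<in>UNIV. \<bar>X$i$k\<bar>)" by (intro sum_mono norm_le_l1_cart)
    also have "\<dots> \<le> (\<Sum>i\<in>(UNIV::'n set). \<Sum>k\<in>(UNIV::'n set). R)"
      by (intro sum_mono entry_bound[OF that])
    finally show ?thesis .
  qed
  then have "bounded K" unfolding bounded_iff by blast
  moreover have "closed K"
    unfolding K_def f_def
    by (simp add: Collect_conj_eq closed_Int closed_primal_feas closed_Collect_le continuous_on_frob)
  moreover have "K \<noteq> {}" using assms(1) by (auto simp: K_def)
  ultimately obtain Xs where "Xs \<in> K" and min: "\<And>Y. Y \<in> K \<Longrightarrow> f Xs \<le> f Y"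
    using continuous_attains_inf[of K f] continuous_on_frob compact_eq_bounded_closed
    by (metis f_def)
  then have "Xs \<in> primal_opt C Cb A b \<epsilon>"
    by (force simp: primal_opt_def K_def f_def)
  then show ?thesis by blast
qed

lemma dual_feas_comb:
  assumes "(y, S) \<in> dual_feas C Cb A e1" "(y', S') \<in> dual_feas C Cb A e2" "0 \<le> u" "0 \<le> v" "u + v = 1"
  shows "(u *\<^sub>R y + v *\<^sub>R y', u *\<^sub>R S + v *\<^sub>R S') \<in> dual_feas C Cb A (u * e1 + v * e2)"
proof -
  have e1: "(\<Sum>i\<in>UNIV. y$i *\<^sub>R A i) + S = C + e1 *\<^sub>R Cb"
    and e2: "(\<Sum>i\<in>UNIV. y'$i *\<^sub>R A i) + S' = C + e2 *\<^sub>R Cb"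
    using assms by (auto simp: dual_feas_def)
  have "(\<Sum>i\<in>UNIV. (u *\<^sub>R y + v *\<^sub>R y') $ i *\<^sub>R A i) + (u *\<^sub>R S + v *\<^sub>R S')
       = u *\<^sub>R ((\<Sum>i\<in>UNIV. y$i *\<^sub>R A i) + S) + v *\<^sub>R ((\<Sum>i\<in>UNIV. y'$i *\<^sub>R A i) + S')"
    by (simp add: scaleR_add_left sum.distrib scaleR_sum_right algebra_simps)
  also have "\<dots> = (u + v) *\<^sub>R C + (u * e1 + v * e2) *\<^sub>R Cb"
    unfolding e1 e2 by (simp add: algebra_simps)
  finally show ?thesis using assms psd_comb by (auto simp: dual_feas_def)
qed

lemma E_set_lower_bound:
  assumes "\<epsilon> \<in> E_set C Cb A b" "X0 \<in> primal_feas A b"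
  obtains L where "\<And>X. X \<in> primal_feas A b \<Longrightarrow> L \<le> frob (C + \<epsilon> *\<^sub>R Cb) X"
proof -
  define V where "V = opt_val C Cb A b \<epsilon>"
  have lower: "V \<le> ereal (frob (C + \<epsilon> *\<^sub>R Cb) X)" if "X \<in> primal_feas A b" for X
    unfolding V_def opt_val_def using that by (rule INF_lower)
  have "V > -\<infinity>" using assms(1) by (simp add: V_def E_set_def)
  moreover have "V \<noteq> \<infinity>" using lower[OF assms(2)] by auto
  ultimately obtain r where "V = ereal r" by (cases V) auto
  with lower that show thesis by auto
qed

subsection \<open>Optimal sets and the optimal partition\<close>

lemma convex_primal_opt: "convex (primal_opt C Cb A b \<epsilon>)"
proof (rule convexI)
  fix X Y and u v :: real
  assume X: "X \<in> primal_opt C Cb A b \<epsilon>" and Y: "Y \<in> primal_opt C Cb A b \<epsilon>"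
    and uv: "0 \<le> u" "0 \<le> v" "u + v = 1"
  let ?f = "frob (C + \<epsilon> *\<^sub>R Cb)"
  have "psd (u *\<^sub>R X + v *\<^sub>R Y)"
    using X Y uv by (intro psd_comb) (auto simp: primal_opt_def primal_feas_def)
  moreover have "frob (A i) (u *\<^sub>R X + v *\<^sub>R Y) = b$i" for i
  proof -
    have "frob (A i) (u *\<^sub>R X + v *\<^sub>R Y) = (u + v) * b$i" using X Y
      by (auto simp: frob_add_right frob_scaleR_right primal_opt_def primal_feas_def distrib_right)
    then show ?thesis using uv by simp
  qed
  moreover have "?f (u *\<^sub>R X + v *\<^sub>R Y) \<le> ?f X'" if "X' \<in> primal_feas A b" for X'
  proof -
    have "?f X \<le> ?f X'" "?f Y \<le> ?f X'" using X Y that by (auto simp: primal_opt_def)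
    then have "u * ?f X + v * ?f Y \<le> u * ?f X' + v * ?f X'"
      using uv by (intro add_mono mult_left_mono) auto
    then show ?thesis using uv by (simp add: frob_add_right frob_scaleR_right distrib_right[symmetric])
  qed
  ultimately show "u *\<^sub>R X + v *\<^sub>R Y \<in> primal_opt C Cb A b \<epsilon>"
    by (auto simp: primal_opt_def primal_feas_def psd_def)
qed

lemma convex_dual_opt: "convex (dual_opt C Cb A b \<epsilon>)"
proof (rule convexI)
  fix p q and u v :: real
  assume p: "p \<in> dual_opt C Cb A b \<epsilon>" and q: "q \<in> dual_opt C Cb A b \<epsilon>"
    and uv: "0 \<le> u" "0 \<le> v" "u + v = 1"
  obtain y S y' S' where pq: "p = (y, S)" "q = (y', S')" by (cases p, cases q)
  have "(u *\<^sub>R y + v *\<^sub>R y', u *\<^sub>R S + v *\<^sub>R S') \<in> dual_feas C Cb A (u * \<epsilon> + v * \<epsilon>)"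
    using p q uv pq by (intro dual_feas_comb) (auto simp: dual_opt_def)
  moreover have "u * \<epsilon> + v * \<epsilon> = \<epsilon>" using uv by (simp add: distrib_right[symmetric])
  moreover have "b \<bullet> y'' \<le> b \<bullet> (u *\<^sub>R y + v *\<^sub>R y')" if "(y'', S'') \<in> dual_feas C Cb A \<epsilon>" for y'' S''
  proof -
    have "b \<bullet> y'' \<le> b \<bullet> y" "b \<bullet> y'' \<le> b \<bullet> y'" using p q pq that by (auto simp: dual_opt_def)
    then have "u * (b \<bullet> y'') + v * (b \<bullet> y'') \<le> u * (b \<bullet> y) + v * (b \<bullet> y')"
      using uv by (intro add_mono mult_left_mono) auto
    then show ?thesis using uv by (simp add: inner_add_right distrib_right[symmetric])
  qed
  ultimately show "u *\<^sub>R p + v *\<^sub>R q \<in> dual_opt C Cb A b \<epsilon>"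
    unfolding pq dual_opt_def by auto
qed

lemma dual_opt_if_zero_gap:
  assumes "X \<in> primal_feas A b" "(y, S) \<in> dual_feas C Cb A \<epsilon>" "frob S X = 0"
  shows "(y, S) \<in> dual_opt C Cb A b \<epsilon>"
  using assms weak_duality[OF assms(1)] primal_dual_gap[OF assms(1,2)]
  by (fastforce simp: dual_opt_def)

lemma col_space_subset_if_psd_extension:
  assumes "psd Y" "symmetric_mat X" "psd ((1 - e) *\<^sub>R Y + e *\<^sub>R X)" "e > 1"
  shows "col_space Y \<subseteq> col_space (X::real^'n^'n)"
proof (rule col_space_subset_if_null_space_subset[OF assms(2)])
  show "symmetric_mat Y" using assms(1) by (simp add: psd_def)
  fix w assume "X *v w = 0"
  then have "0 \<le> (1 - e) * (w \<bullet> (Y *v w))"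
    using psd_quadratic_form_nonneg[OF assms(3), of w] by (simp add: quadratic_form_comb)
  moreover have "(1 - e) * (w \<bullet> (Y *v w)) \<le> 0"
    using psd_quadratic_form_nonneg[OF assms(1), of w] assms(4) by (intro mult_nonpos_nonneg) auto
  ultimately have "w \<bullet> (Y *v w) = 0" using assms(4) by simp
  then show "Y *v w = 0" by (rule psd_quadratic_form_eq_0D[OF assms(1)])
qed

lemma col_space_subset_psd_comb:
  assumes "psd Y" "psd Z" "0 \<le> s" "0 < t"
  shows "col_space Z \<subseteq> col_space (s *\<^sub>R Y + t *\<^sub>R (Z::real^'n^'n))"
proof (rule col_space_subset_if_null_space_subset)
  show "symmetric_mat (s *\<^sub>R Y + t *\<^sub>R Z)" "symmetric_mat Z"
    using psd_comb[OF assms(1-3) less_imp_le[OF assms(4)]] assms(2) by (simp_all add: psd_def)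
  fix w assume "(s *\<^sub>R Y + t *\<^sub>R Z) *v w = 0"
  then have "s * (w \<bullet> (Y *v w)) + t * (w \<bullet> (Z *v w)) = 0"
    using quadratic_form_comb[of w s Y t Z] by simp
  moreover have "0 \<le> s * (w \<bullet> (Y *v w))"
    using psd_quadratic_form_nonneg[OF assms(1), of w] assms(3) by simp
  ultimately have "t * (w \<bullet> (Z *v w)) \<le> 0" by linarith
  then have "w \<bullet> (Z *v w) = 0"
    using psd_quadratic_form_nonneg[OF assms(2), of w] assms(4) by (simp add: mult_le_0_iff)
  then show "Z *v w = 0" by (rule psd_quadratic_form_eq_0D[OF assms(2)])
qed

text \<open>A relative interior point of a convex set can be extended beyond any other point of the set;
  for psd matrices this forces the column space of the other point into its own.\<close>

lemma col_space_subset_rel_interior_primal_opt: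
  assumes "X \<in> rel_interior (primal_opt C Cb A b \<epsilon>)" "Y \<in> primal_opt C Cb A b \<epsilon>"
  shows "col_space Y \<subseteq> col_space X"
proof -
  have "Y \<in> affine hull primal_opt C Cb A b \<epsilon>" using assms(2) by (rule hull_inc)
  then obtain e where "e > 1" and "(1 - e) *\<^sub>R Y + e *\<^sub>R X \<in> primal_opt C Cb A b \<epsilon>"
    using convex_rel_interior_if2[OF convex_primal_opt assms(1)] by blast
  moreover have "X \<in> primal_opt C Cb A b \<epsilon>" using assms(1) rel_interior_subset by blast
  ultimately show ?thesis
    using assms(2) col_space_subset_if_psd_extension[of Y X e]
    by (simp add: primal_opt_def primal_feas_def)
qed

lemma col_space_subset_rel_interior_dual_opt:
  assumes "(y, S) \<in> rel_interior (dual_opt C Cb A b \<epsilon>)" "(y', S') \<in> dual_opt C Cb A b \<epsilon>"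
  shows "col_space S' \<subseteq> col_space S"
proof -
  have "(y', S') \<in> affine hull dual_opt C Cb A b \<epsilon>" using assms(2) by (rule hull_inc)
  then obtain e where "e > 1" and "(1 - e) *\<^sub>R (y', S') + e *\<^sub>R (y, S) \<in> dual_opt C Cb A b \<epsilon>"
    using convex_rel_interior_if2[OF convex_dual_opt assms(1)] by blast
  moreover have "(y, S) \<in> dual_opt C Cb A b \<epsilon>" using assms(1) rel_interior_subset by blast
  ultimately show ?thesis
    using assms(2) col_space_subset_if_psd_extension[of S' S e]
    by (simp add: dual_opt_def dual_feas_def psd_def)
qed

text \<open>The choice made by \<open>SOME\<close> in \<open>opt_partition\<close> is irrelevant: maximally complementary
  solutions all have the same column spaces.\<close>

lemma opt_partition_eq:
  assumes "max_compl C Cb A b \<epsilon> X y S"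
  shows "opt_partition C Cb A b \<epsilon> =
    (col_space X, orthogonal_comp {u + v | u v. u \<in> col_space X \<and> v \<in> col_space S}, col_space S)"
proof -
  define Q where "Q = (\<lambda>(X, y, S). max_compl C Cb A b \<epsilon> X y S)"
  obtain X' y' S' where some: "(SOME p. Q p) = (X', y', S')" by (cases "SOME p. Q p") auto
  have "Q (SOME p. Q p)" using assms by (intro someI_ex[of Q]) (auto simp: Q_def)
  then have max': "max_compl C Cb A b \<epsilon> X' y' S'" unfolding some by (simp add: Q_def)
  have ri: "X \<in> rel_interior (primal_opt C Cb A b \<epsilon>)" "X' \<in> rel_interior (primal_opt C Cb A b \<epsilon>)"
    "(y, S) \<in> rel_interior (dual_opt C Cb A b \<epsilon>)" "(y', S') \<in> rel_interior (dual_opt C Cb A b \<epsilon>)"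
    using assms max' by (simp_all add: max_compl_def)
  note opt = ri[THEN rel_interior_subset[THEN subsetD]]
  have "col_space X' = col_space X" "col_space S' = col_space S"
    using col_space_subset_rel_interior_primal_opt[OF ri(1) opt(2)]
      col_space_subset_rel_interior_primal_opt[OF ri(2) opt(1)]
      col_space_subset_rel_interior_dual_opt[OF ri(3) opt(4)]
      col_space_subset_rel_interior_dual_opt[OF ri(4) opt(3)] by blast+
  then show ?thesis
    unfolding opt_partition_def Q_def[symmetric] some by simp
qed

lemma invariancy_set_absorbs:
  assumes "invariancy_set C Cb A b I" "\<epsilon> \<in> interior (E_set C Cb A b)" "\<epsilon>0 \<in> I"
    and "opt_partition C Cb A b \<epsilon> = opt_partition C Cb A b \<epsilon>0"
  shows "\<epsilon> \<in> I"
proof -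
  let ?P = "opt_partition C Cb A b"
  have I: "I \<subseteq> interior (E_set C Cb A b)" "\<forall>e1\<in>I. \<forall>e2\<in>I. ?P e1 = ?P e2"
    and maximal: "\<And>J. I \<subseteq> J \<Longrightarrow> J \<subseteq> interior (E_set C Cb A b) \<Longrightarrow>
      (\<forall>e1\<in>J. \<forall>e2\<in>J. ?P e1 = ?P e2) \<Longrightarrow> J = I"
    using assms(1) unfolding invariancy_set_def by blast+
  have "insert \<epsilon> I = I"
  proof (rule maximal)
    show "I \<subseteq> insert \<epsilon> I" by blast
    show "insert \<epsilon> I \<subseteq> interior (E_set C Cb A b)" using I(1) assms(2) by blast
    show "\<forall>e1\<in>insert \<epsilon> I. \<forall>e2\<in>insert \<epsilon> I. ?P e1 = ?P e2"
      using I(2) assms(3,4) by (metis insert_iff)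
  qed
  then show ?thesis by blast
qed

lemma open_contains_comb_near:
  fixes a c :: real
  assumes "open I" "a \<in> I"
  obtains t where "0 < t" "t < 1" "(1 - t) * a + t * c \<in> I"
proof -
  obtain \<delta> where "\<delta> > 0" "ball a \<delta> \<subseteq> I" using assms open_contains_ball by blast
  define d where "d = \<bar>a - c\<bar> + 1"
  have "d > 0" by (simp add: d_def add_nonneg_pos)
  define t where "t = min (1 / 2) (\<delta> / (2 * d))"
  have "0 < t" "t < 1" using \<open>\<delta> > 0\<close> \<open>d > 0\<close> by (auto simp: t_def)
  have "a - ((1 - t) * a + t * c) = t * (a - c)" by (simp add: algebra_simps)
  then have "dist a ((1 - t) * a + t * c) = t * \<bar>a - c\<bar>"
    using \<open>0 < t\<close> by (simp add: dist_real_def abs_mult)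
  also have "\<dots> \<le> \<delta> / (2 * d) * d"
    using \<open>0 < t\<close> \<open>d > 0\<close> by (intro mult_mono) (auto simp: t_def d_def)
  also have "\<dots> < \<delta>" using \<open>\<delta> > 0\<close> \<open>d > 0\<close> by simp
  finally show thesis using \<open>ball a \<delta> \<subseteq> I\<close> \<open>0 < t\<close> \<open>t < 1\<close> that by auto
qed

locale slater_sdp =
  fixes C Cb :: "real^'n^'n" and A :: "'m::finite \<Rightarrow> real^'n^'n" and b :: "real^'m"
  assumes symmetric_C: "symmetric_mat C" and symmetric_Cb: "symmetric_mat Cb"
    and symmetric_A: "\<forall>i. symmetric_mat (A i)"
    and inj_A: "inj A" and independent_A: "independent (range A)"
    and primal_slater: "\<exists>X. pd X \<and> (\<forall>i. frob (A i) X = b $ i)"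
    and dual_slater: "\<exists>y S. pd S \<and> (\<Sum>i\<in>UNIV. y $ i *\<^sub>R A i) + S = C"
begin

lemma primal_pd_feasible:
  obtains X0 where "pd X0" "\<forall>i. frob (A i) X0 = b $ i" "X0 \<in> primal_feas A b"
  using primal_slater pd_imp_psd by (auto simp: primal_feas_def psd_def)

lemma dual_feas_if_bounded:
  assumes lower: "\<And>X. X \<in> primal_feas A b \<Longrightarrow> L \<le> frob (C + \<epsilon> *\<^sub>R Cb) X"
  shows "\<exists>y S. (y, S) \<in> dual_feas C Cb A \<epsilon> \<and> L \<le> b \<bullet> y"
proof -
  obtain X0 where "pd X0" and X0_feas: "\<forall>i. frob (A i) X0 = b $ i" using primal_pd_feasible by blast
  obtain y c where "(y, c) \<noteq> 0" "0 \<le> c"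
    and sep: "\<And>X. psd X \<Longrightarrow> frob (\<Sum>i\<in>UNIV. y$i *\<^sub>R A i) X - b \<bullet> y \<le> c * (frob (C + \<epsilon> *\<^sub>R Cb) X - L)"
    using sdp_separation[OF lower] by blast
  define Z where "Z = (\<Sum>i\<in>UNIV. y$i *\<^sub>R A i)"
  have "symmetric_mat Z" unfolding Z_def using symmetric_A by (intro symmetric_mat_sum symmetric_mat_scaleR) auto
  have "b \<bullet> y = frob Z X0"
    using X0_feas by (simp add: Z_def frob_sum_left frob_scaleR_left inner_vec_def mult.commute)
  have "c \<noteq> 0"
  proof
    assume "c = 0"
    then have "frob Z X \<le> frob Z X0" if "psd X" for X
      using sep[OF that, unfolded Z_def[symmetric] \<open>b \<bullet> y = frob Z X0\<close> \<open>c = 0\<close>] by simp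
    then have "Z = 0" using \<open>symmetric_mat Z\<close> \<open>pd X0\<close> by (intro frob_max_at_pd_imp_zero)
    then have "y $ i = 0" for i
      using independent_range_sum_eq_0[OF inj_A independent_A, of "\<lambda>i. y$i"] unfolding Z_def by blast
    then have "y = 0" by (simp add: vec_eq_iff)
    with \<open>c = 0\<close> \<open>(y, c) \<noteq> 0\<close> show False by (simp add: zero_prod_def)
  qed
  define y' where "y' = (1 / c) *\<^sub>R y"
  define S where "S = C + \<epsilon> *\<^sub>R Cb - (\<Sum>i\<in>UNIV. y'$i *\<^sub>R A i)"
  have "c > 0" using \<open>0 \<le> c\<close> \<open>c \<noteq> 0\<close> by simp
  have "(\<Sum>i\<in>UNIV. y'$i *\<^sub>R A i) = (1 / c) *\<^sub>R Z"
    by (simp add: y'_def Z_def scaleR_sum_right)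
  then have S_eq: "frob S X = frob (C + \<epsilon> *\<^sub>R Cb) X - frob Z X / c" for X
    by (simp add: S_def frob_diff_left frob_scaleR_left)
  have bound: "L - b \<bullet> y' \<le> frob S X" if "psd X" for X
  proof -
    have "(frob Z X - b \<bullet> y) / c \<le> frob (C + \<epsilon> *\<^sub>R Cb) X - L"
      using sep[OF that] \<open>c > 0\<close> by (simp add: Z_def divide_le_eq mult.commute)
    then show ?thesis by (simp add: S_eq y'_def diff_divide_distrib)
  qed
  have "symmetric_mat S"
    unfolding S_def using symmetric_C symmetric_Cb symmetric_A
    by (intro symmetric_mat_diff symmetric_mat_add symmetric_mat_scaleR symmetric_mat_sum) auto
  then have "psd S" using bound by (rule psd_if_frob_bounded_below)
  then have "(y', S) \<in> dual_feas C Cb A \<epsilon>" by (simp add: dual_feas_def S_def)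
  moreover have "L \<le> b \<bullet> y'" using bound[OF psd_zero] by simp
  ultimately show ?thesis by blast
qed

text \<open>Move away from \<open>0\<close> inside \<open>int(\<E>)\<close> to a point \<open>\<epsilon>'\<close> with a dual feasible solution, and take the
  convex combination with the positive definite dual solution at \<open>0\<close> that lands at \<open>\<epsilon>\<close>.\<close>

lemma dual_pd_feasible:
  assumes "\<epsilon> \<in> interior (E_set C Cb A b)"
  shows "\<exists>y S. pd S \<and> (\<Sum>i\<in>UNIV. y $ i *\<^sub>R A i) + S = C + \<epsilon> *\<^sub>R Cb"
proof (cases "\<epsilon> = 0")
  case True
  then show ?thesis using dual_slater by simp
next
  case False
  obtain X0 where X0: "X0 \<in> primal_feas A b" using primal_pd_feasible by blast
  obtain y0 S0 where S0: "pd S0" "(\<Sum>i\<in>UNIV. y0 $ i *\<^sub>R A i) + S0 = C" using dual_slater by blast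
  obtain \<delta> where "\<delta> > 0" and ball: "ball \<epsilon> \<delta> \<subseteq> E_set C Cb A b"
    using assms by (meson mem_interior)
  define \<epsilon>' where "\<epsilon>' = \<epsilon> + (\<delta> / 2) * sgn \<epsilon>"
  have "dist \<epsilon> \<epsilon>' < \<delta>" using \<open>\<delta> > 0\<close> False by (simp add: \<epsilon>'_def dist_real_def abs_mult abs_sgn_eq)
  then have "\<epsilon>' \<in> E_set C Cb A b" using ball by auto
  then obtain y' S' where dual': "(y', S') \<in> dual_feas C Cb A \<epsilon>'"
    using E_set_lower_bound[OF _ X0] dual_feas_if_bounded by metis
  define lam where "lam = (\<delta> / 2) / (\<bar>\<epsilon>\<bar> + \<delta> / 2)"
  have lam: "0 < lam" "lam < 1" using \<open>\<delta> > 0\<close> False by (auto simp: lam_def field_simps)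
  have dual0: "(y0, S0) \<in> dual_feas C Cb A 0" using S0 pd_imp_psd by (auto simp: dual_feas_def)
  have "lam * 0 + (1 - lam) * \<epsilon>' = \<epsilon>"
    using False \<open>\<delta> > 0\<close> unfolding lam_def \<epsilon>'_def
    by (cases "\<epsilon> > 0") (auto simp: field_simps sgn_if)
  then have "(lam *\<^sub>R y0 + (1 - lam) *\<^sub>R y', lam *\<^sub>R S0 + (1 - lam) *\<^sub>R S') \<in> dual_feas C Cb A \<epsilon>"
    using dual_feas_comb[OF dual0 dual', of lam "1 - lam"] lam by simp
  moreover have "pd (lam *\<^sub>R S0 + (1 - lam) *\<^sub>R S')"
    using S0(1) dual' lam by (intro pd_comb) (auto simp: dual_feas_def)
  ultimately show ?thesis unfolding dual_feas_def by blast
qed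

lemma strong_duality:
  assumes "\<epsilon> \<in> interior (E_set C Cb A b)"
  shows "primal_opt C Cb A b \<epsilon> \<noteq> {}" "dual_opt C Cb A b \<epsilon> \<noteq> {}"
    and "\<And>X y S. X \<in> primal_opt C Cb A b \<epsilon> \<Longrightarrow> (y, S) \<in> dual_opt C Cb A b \<epsilon> \<Longrightarrow> frob S X = 0"
proof -
  obtain X0 where X0: "X0 \<in> primal_feas A b" using primal_pd_feasible by blast
  show "primal_opt C Cb A b \<epsilon> \<noteq> {}"
    using dual_pd_feasible[OF assms] primal_opt_nonempty_if_dual_pd[OF X0] by blast
  then obtain Xs where "Xs \<in> primal_opt C Cb A b \<epsilon>" by blast
  then have Xs: "Xs \<in> primal_feas A b"
    and Xs_min: "\<And>X. X \<in> primal_feas A b \<Longrightarrow> frob (C + \<epsilon> *\<^sub>R Cb) Xs \<le> frob (C + \<epsilon> *\<^sub>R Cb) X"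
    by (auto simp: primal_opt_def)
  obtain y S where dual: "(y, S) \<in> dual_feas C Cb A \<epsilon>" and "frob (C + \<epsilon> *\<^sub>R Cb) Xs \<le> b \<bullet> y"
    using dual_feas_if_bounded[OF Xs_min] by blast
  then have "(y, S) \<in> dual_opt C Cb A b \<epsilon>"
    unfolding dual_opt_def using weak_duality[OF Xs] by fastforce
  then show "dual_opt C Cb A b \<epsilon> \<noteq> {}" by blast
  fix X y' S'
  assume X: "X \<in> primal_opt C Cb A b \<epsilon>" and opt': "(y', S') \<in> dual_opt C Cb A b \<epsilon>"
  have X_feas: "X \<in> primal_feas A b" and dual': "(y', S') \<in> dual_feas C Cb A \<epsilon>"
    using X opt' by (simp_all add: primal_opt_def dual_opt_def)
  have "frob (C + \<epsilon> *\<^sub>R Cb) X \<le> frob (C + \<epsilon> *\<^sub>R Cb) Xs" "b \<bullet> y \<le> b \<bullet> y'"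
    using X Xs opt' dual by (auto simp: primal_opt_def dual_opt_def)
  moreover have "0 \<le> frob S' X"
    using X_feas dual' by (intro frob_psd_nonneg) (simp_all add: primal_feas_def dual_feas_def)
  ultimately show "frob S' X = 0"
    using primal_dual_gap[OF X_feas dual'] \<open>frob (C + \<epsilon> *\<^sub>R Cb) Xs \<le> b \<bullet> y\<close> by linarith
qed

lemma max_compl_exists:
  assumes "\<epsilon> \<in> interior (E_set C Cb A b)"
  obtains X y S where "max_compl C Cb A b \<epsilon> X y S"
proof -
  obtain X where "X \<in> rel_interior (primal_opt C Cb A b \<epsilon>)"
    using strong_duality(1)[OF assms] rel_interior_eq_empty[OF convex_primal_opt] by blast
  moreover obtain p where "p \<in> rel_interior (dual_opt C Cb A b \<epsilon>)"
    using strong_duality(2)[OF assms] rel_interior_eq_empty[OF convex_dual_opt] by blast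
  ultimately show thesis using that by (cases p) (auto simp: max_compl_def)
qed

subsection \<open>Invariancy sets\<close>

lemma invariancy_set_max_compl:
  assumes "invariancy_set C Cb A b I" "\<epsilon>0 \<in> I" "max_compl C Cb A b \<epsilon>0 X0 y0 S0" "\<epsilon> \<in> I"
  obtains X y S where "max_compl C Cb A b \<epsilon> X y S"
    "col_space X = col_space X0" "col_space S = col_space S0"
proof -
  have "\<epsilon> \<in> interior (E_set C Cb A b)" using assms(1,4) unfolding invariancy_set_def by blast
  then obtain X y S where max: "max_compl C Cb A b \<epsilon> X y S" by (rule max_compl_exists)
  have "opt_partition C Cb A b \<epsilon> = opt_partition C Cb A b \<epsilon>0"
    using assms(1,2,4) unfolding invariancy_set_def by blast
  then have "col_space X = col_space X0" "col_space S = col_space S0"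
    unfolding opt_partition_eq[OF max] opt_partition_eq[OF assms(3)] by simp_all
  with max that show thesis by blast
qed

text \<open>Maximally complementary dual slacks at other points of the invariancy set have the column
  space of \<open>S0\<close>, so they stay complementary to \<open>X0\<close>.\<close>

lemma max_compl_primal_opt_on_invariancy_set:
  assumes "invariancy_set C Cb A b I" "\<epsilon>0 \<in> I" "max_compl C Cb A b \<epsilon>0 X0 y0 S0" "\<epsilon> \<in> I"
  shows "X0 \<in> primal_opt C Cb A b \<epsilon>"
proof -
  have X0: "X0 \<in> primal_opt C Cb A b \<epsilon>0" and S0: "(y0, S0) \<in> dual_opt C Cb A b \<epsilon>0"
    using assms(3) rel_interior_subset by (auto simp: max_compl_def)
  then have X0_feas: "X0 \<in> primal_feas A b" by (simp add: primal_opt_def)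
  then have "psd X0" by (simp add: primal_feas_def)
  have "\<epsilon>0 \<in> interior (E_set C Cb A b)" using assms(1,2) unfolding invariancy_set_def by blast
  then have "frob S0 X0 = 0" using strong_duality(3) X0 S0 by blast
  moreover have "psd S0" using S0 by (simp add: dual_opt_def dual_feas_def)
  ultimately have orth: "(X0 *v a) \<bullet> (S0 *v c) = 0" for a c
    using frob_psd_eq_0_imp_col_spaces_orthogonal \<open>psd X0\<close> by blast
  obtain X y S where max: "max_compl C Cb A b \<epsilon> X y S"
    and "col_space X = col_space X0" "col_space S = col_space S0"
    by (rule invariancy_set_max_compl[OF assms])
  have dual: "(y, S) \<in> dual_feas C Cb A \<epsilon>"
    using max rel_interior_subset by (auto simp: max_compl_def dual_opt_def)
  have "(X0 *v a) \<bullet> (S *v c) = 0" for a c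
  proof -
    have "S *v c \<in> col_space S0"
      unfolding \<open>col_space S = col_space S0\<close>[symmetric] by (simp add: col_space_def)
    then obtain c' where "S *v c = S0 *v c'" unfolding col_space_def by blast
    then show ?thesis using orth by simp
  qed
  moreover have "symmetric_mat X0" using \<open>psd X0\<close> by (simp add: psd_def)
  ultimately have "frob S X0 = 0"
    using frob_eq_0_if_col_spaces_orthogonal frob_commute by metis
  show ?thesis
    unfolding primal_opt_def
  proof (intro CollectI conjI ballI X0_feas)
    fix X' assume "X' \<in> primal_feas A b"
    show "frob (C + \<epsilon> *\<^sub>R Cb) X0 \<le> frob (C + \<epsilon> *\<^sub>R Cb) X'"
      using primal_dual_gap[OF X0_feas dual] weak_duality[OF \<open>X' \<in> primal_feas A b\<close> dual]
        \<open>frob S X0 = 0\<close> by simp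
  qed
qed

text \<open>Optimality of a fixed feasible matrix is a closed condition in \<open>\<epsilon>\<close>.\<close>

lemma max_compl_primal_opt_on_closure:
  assumes "invariancy_set C Cb A b I" "\<epsilon>0 \<in> I" "max_compl C Cb A b \<epsilon>0 X0 y0 S0" "\<epsilon> \<in> closure I"
  shows "X0 \<in> primal_opt C Cb A b \<epsilon>"
proof -
  have X0_feas: "X0 \<in> primal_feas A b"
    using assms(3) rel_interior_subset by (auto simp: max_compl_def primal_opt_def)
  show ?thesis
    unfolding primal_opt_def
  proof (intro CollectI conjI ballI X0_feas)
    fix X' assume "X' \<in> primal_feas A b"
    let ?K = "{e. frob C X0 + e * frob Cb X0 \<le> frob C X' + e * frob Cb X'}"
    have "I \<subseteq> ?K"
    proof
      fix e assume "e \<in> I"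
      then have "frob (C + e *\<^sub>R Cb) X0 \<le> frob (C + e *\<^sub>R Cb) X'"
        using max_compl_primal_opt_on_invariancy_set[OF assms(1-3)] \<open>X' \<in> primal_feas A b\<close>
        by (simp add: primal_opt_def)
      then show "e \<in> ?K" by (simp add: frob_add_left frob_scaleR_left)
    qed
    moreover have "closed ?K" by (intro closed_Collect_le continuous_intros)
    ultimately have "closure I \<subseteq> ?K" by (rule closure_minimal)
    then show "frob (C + \<epsilon> *\<^sub>R Cb) X0 \<le> frob (C + \<epsilon> *\<^sub>R Cb) X'"
      using assms(4) by (auto simp: frob_add_left frob_scaleR_left)
  qed
qed

text \<open>A convex combination of the dual solutions at \<open>\<epsilon>0\<close> and at the boundary point is complementary
  to \<open>X0\<close>, hence dual optimal at a point of the invariancy set, where maximally complementary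
  slacks have the column space of \<open>S0\<close>.\<close>

lemma max_compl_dual_col_space_on_closure:
  assumes "invariancy_set C Cb A b I" "open I" "\<epsilon>0 \<in> I" "max_compl C Cb A b \<epsilon>0 X0 y0 S0"
    and "\<epsilon> \<in> closure I" "\<epsilon> \<in> interior (E_set C Cb A b)" "max_compl C Cb A b \<epsilon> X y S"
  shows "col_space S \<subseteq> col_space S0"
proof -
  have X0: "X0 \<in> primal_opt C Cb A b \<epsilon>0" and S0: "(y0, S0) \<in> dual_opt C Cb A b \<epsilon>0"
    using assms(4) rel_interior_subset by (auto simp: max_compl_def)
  have S: "(y, S) \<in> dual_opt C Cb A b \<epsilon>" using assms(7) rel_interior_subset by (auto simp: max_compl_def)
  have X0_feas: "X0 \<in> primal_feas A b" using X0 by (simp add: primal_opt_def)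
  have "\<epsilon>0 \<in> interior (E_set C Cb A b)" using assms(1,3) unfolding invariancy_set_def by blast
  then have gap0: "frob S0 X0 = 0" using strong_duality(3) X0 S0 by blast
  have gap: "frob S X0 = 0"
    using strong_duality(3)[OF assms(6) max_compl_primal_opt_on_closure[OF assms(1,3,4,5)] S] .
  obtain t where "0 < t" "t < 1" and in_I: "(1 - t) * \<epsilon>0 + t * \<epsilon> \<in> I"
    using open_contains_comb_near[OF assms(2,3)] by blast
  define St where "St = (1 - t) *\<^sub>R S0 + t *\<^sub>R S"
  have "frob St X0 = 0" using gap0 gap by (simp add: St_def frob_add_left frob_scaleR_left)
  have "((1 - t) *\<^sub>R y0 + t *\<^sub>R y, St) \<in> dual_feas C Cb A ((1 - t) * \<epsilon>0 + t * \<epsilon>)"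
    using S0 S \<open>0 < t\<close> \<open>t < 1\<close> unfolding St_def by (intro dual_feas_comb) (auto simp: dual_opt_def)
  then have "((1 - t) *\<^sub>R y0 + t *\<^sub>R y, St) \<in> dual_opt C Cb A b ((1 - t) * \<epsilon>0 + t * \<epsilon>)"
    using X0_feas \<open>frob St X0 = 0\<close> by (intro dual_opt_if_zero_gap)
  moreover obtain Xt yt' St' where max: "max_compl C Cb A b ((1 - t) * \<epsilon>0 + t * \<epsilon>) Xt yt' St'"
    and "col_space Xt = col_space X0" "col_space St' = col_space S0"
    by (rule invariancy_set_max_compl[OF assms(1,3,4) in_I])
  ultimately have "col_space St \<subseteq> col_space S0"
    using col_space_subset_rel_interior_dual_opt max unfolding max_compl_def by blast
  moreover have "col_space S \<subseteq> col_space St"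
    unfolding St_def using S0 S \<open>0 < t\<close> \<open>t < 1\<close>
    by (intro col_space_subset_psd_comb) (simp_all add: dual_opt_def dual_feas_def)
  ultimately show ?thesis by blast
qed

end

theorem proposition3:
  fixes C Cb :: "real^'n^'n" and A :: "'m::finite \<Rightarrow> real^'n^'n" and b :: "real^'m"
    and I :: "real set" and \<epsilon>bar \<epsilon>hat :: real
  assumes symC: "symmetric_mat C" and symCb: "symmetric_mat Cb"
    and symA: "\<forall>i. symmetric_mat (A i)"
    and indepA: "inj A" and indepA': "independent (range A)"
    and primal_slater: "\<exists>X. pd X \<and> (\<forall>i. frob (A i) X = b $ i)"
    and dual_slater: "\<exists>y S. pd S \<and> (\<Sum>i\<in>UNIV. y $ i *\<^sub>R A i) + S = C"
    and inv: "invariancy_interval C Cb A b I"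
    and bd: "\<epsilon>bar \<in> frontier I" and bdE: "\<epsilon>bar \<in> interior (E_set C Cb A b)"
    and hat: "\<epsilon>hat \<in> I"
  shows "\<forall>Xh yh Sh Xb yb Sb.
           max_compl C Cb A b \<epsilon>hat Xh yh Sh \<longrightarrow> max_compl C Cb A b \<epsilon>bar Xb yb Sb \<longrightarrow>
           rank Xh \<noteq> rank Xb \<or> rank Sh \<noteq> rank Sb"
proof (intro allI impI)
  interpret slater_sdp C Cb A b
    using symC symCb symA indepA indepA' primal_slater dual_slater by unfold_locales
  fix Xh yh Sh Xb yb Sb
  assume hat_max: "max_compl C Cb A b \<epsilon>hat Xh yh Sh" and bar_max: "max_compl C Cb A b \<epsilon>bar Xb yb Sb"
  have I: "invariancy_set C Cb A b I" "open I" using inv by (simp_all add: invariancy_interval_def)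
  have "\<epsilon>bar \<notin> I" "\<epsilon>bar \<in> closure I" using bd \<open>open I\<close> by (simp_all add: frontier_def interior_open)
  show "rank Xh \<noteq> rank Xb \<or> rank Sh \<noteq> rank Sb"
  proof (rule ccontr)
    assume "\<not> (rank Xh \<noteq> rank Xb \<or> rank Sh \<noteq> rank Sb)"
    then have "rank Xh = rank Xb" "rank Sb = rank Sh" by simp_all
    moreover have "col_space Xh \<subseteq> col_space Xb"
      using col_space_subset_rel_interior_primal_opt bar_max
        max_compl_primal_opt_on_closure[OF I(1) hat hat_max \<open>\<epsilon>bar \<in> closure I\<close>]
      unfolding max_compl_def by blast
    moreover have "col_space Sb \<subseteq> col_space Sh"
      by (rule max_compl_dual_col_space_on_closure[OF I hat hat_max \<open>\<epsilon>bar \<in> closure I\<close> bdE bar_max])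
    ultimately have "col_space Xh = col_space Xb" "col_space Sb = col_space Sh"
      using col_space_eq_if_rank_eq by blast+
    then have "opt_partition C Cb A b \<epsilon>bar = opt_partition C Cb A b \<epsilon>hat"
      unfolding opt_partition_eq[OF bar_max] opt_partition_eq[OF hat_max] by simp
    then have "\<epsilon>bar \<in> I" using invariancy_set_absorbs[OF I(1) bdE hat] by blast
    with \<open>\<epsilon>bar \<notin> I\<close> show False ..
  qed
qed

end
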